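(* Let $f:\mathbb{N}\to\{z\in\mathbb{C}:|z|\le1\}$ be a multiplicative function and $g:=1\ast f$. Then for any $x\ge1$ and $w\ge1$, $$\tilde M_g(x)-\tilde M_g(x/w)\ll\log(2w).$$
   Context: $(1\ast f)(n)=\sum_{d\mid n}f(d)$; $\tilde M_g(y):=\frac1y\sum_{n\le y}g(n)$. The implied constant is absolute. *)

theory Defs
  imports Complex_Main
begin

definition multiplicative :: "(nat \<Rightarrow> complex) \<Rightarrow> bool" where
  "multiplicative f \<longleftrightarrow> f 1 = 1 \<and>
     (\<forall>m n. m > 0 \<longrightarrow> n > 0 \<longrightarrow> coprime m n \<longrightarrow> f (m * n) = f m * f n)"

definition one_conv :: "(nat \<Rightarrow> complex) \<Rightarrow> nat \<Rightarrow> complex" where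
  "one_conv f n = (\<Sum>d\<in>{d. d dvd n}. f d)"

definition Mtilde :: "(nat \<Rightarrow> complex) \<Rightarrow> real \<Rightarrow> complex" where
  "Mtilde g y = of_real (1 / y) * (\<Sum>n\<in>{1..nat \<lfloor>y\<rfloor>}. g n)"

end

theory Submission
  imports Defs
begin

text \<open>
  Swapping the order of summation, \<open>y M(y) = \<Sum>\<^sub>d\<^sub>\<le>\<^sub>y f(d) \<lfloor>y/d\<rfloor>\<close> for \<open>g = 1 * f\<close>, so
  \<open>M(y)\<close> is within 1 of \<open>\<Sum>\<^sub>d\<^sub>\<le>\<^sub>y f(d)/d\<close> when \<open>|f| \<le> 1\<close>. Hence \<open>M(x) - M(x/w)\<close> is, up to 2,
  bounded by the harmonic sum over \<open>x/w < d \<le> x\<close>, which is at most \<open>1 + log (2w)\<close>.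
\<close>

lemma card_multiples_atLeastAtMost:
  assumes "0 < d"
  shows "card {n \<in> {1..N}. d dvd n} = N div d"
proof -
  have "{n \<in> {1..N}. d dvd n} = (\<lambda>k. d * k) ` {1..N div d}"
  proof (intro equalityI subsetI)
    fix n assume "n \<in> {n \<in> {1..N}. d dvd n}"
    then obtain k where "n = d * k" "1 \<le> d * k" "d * k \<le> N" by auto
    moreover from this have "k \<in> {1..N div d}"
      using assms by (auto simp: less_eq_div_iff_mult_less_eq mult.commute)
    ultimately show "n \<in> (\<lambda>k. d * k) ` {1..N div d}" by blast
  next
    fix n assume "n \<in> (\<lambda>k. d * k) ` {1..N div d}"
    then obtain k where "n = d * k" "1 \<le> k" "k \<le> N div d" by (metis atLeastAtMost_iff imageE)
    then show "n \<in> {n \<in> {1..N}. d dvd n}"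
      using assms by (simp add: less_eq_div_iff_mult_less_eq mult.commute)
  qed
  moreover have "inj_on (\<lambda>k. d * k) {1..N div d}" using assms by (simp add: inj_on_def)
  ultimately show ?thesis by (simp add: card_image)
qed

lemma sum_one_conv_eq:
  "(\<Sum>n\<in>{1..N}. one_conv f n) = (\<Sum>d\<in>{1..N}. f d * of_nat (N div d))"
proof -
  have "one_conv f n = (\<Sum>d\<in>{d \<in> {1..N}. d dvd n}. f d)" if "n \<in> {1..N}" for n
  proof -
    have "{d. d dvd n} = {d \<in> {1..N}. d dvd n}"
      using that by (auto dest: dvd_imp_le intro: Nat.gr0I)
    then show ?thesis unfolding one_conv_def by simp
  qed
  then have "(\<Sum>n\<in>{1..N}. one_conv f n) = (\<Sum>n\<in>{1..N}. \<Sum>d\<in>{d \<in> {1..N}. d dvd n}. f d)"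
    by (rule sum.cong[OF refl])
  also have "\<dots> = (\<Sum>d\<in>{1..N}. \<Sum>n\<in>{n \<in> {1..N}. d dvd n}. f d)"
    by (rule sum.swap_restrict) simp_all
  also have "\<dots> = (\<Sum>d\<in>{1..N}. f d * of_nat (N div d))"
    by (intro sum.cong refl, subst sum_constant, subst card_multiples_atLeastAtMost) auto
  finally show ?thesis .
qed

lemma inverse_Suc_le_ln_diff:
  assumes "1 \<le> m"
  shows "1 / real (Suc m) \<le> ln (Suc m) - ln m"
proof -
  have "ln (real m / real (Suc m)) \<le> real m / real (Suc m) - 1"
    using assms by (intro ln_le_minus_one) auto
  also have "\<dots> = - 1 / real (Suc m)" by (simp add: field_simps)
  finally show ?thesis using assms by (simp add: ln_div)
qed

lemma sum_inverse_greaterThanAtMost_le_ln: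
  assumes "1 \<le> N" "N \<le> M"
  shows "(\<Sum>d\<in>{N<..M}. 1 / real d) \<le> ln M - ln N"
  using assms(2)
proof (induction M rule: dec_induct)
  case base
  then show ?case by simp
next
  case (step m)
  have "(\<Sum>d\<in>{N<..Suc m}. 1 / real d) = 1 / real (Suc m) + (\<Sum>d\<in>{N<..m}. 1 / real d)"
  proof -
    have "{N<..Suc m} = insert (Suc m) {N<..m}" using step.hyps by auto
    then show ?thesis by simp
  qed
  also have "\<dots> \<le> ln (Suc m) - ln m + (ln m - ln N)"
    using inverse_Suc_le_ln_diff[of m] assms(1) step by linarith
  finally show ?case by simp
qed

lemma abs_div_floor_div_minus_inverse_le:
  assumes "0 < d" "0 < y"
  shows "\<bar>real (nat \<lfloor>y\<rfloor> div d) / y - 1 / real d\<bar> \<le> 1 / y"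
proof -
  define q where "q = nat \<lfloor>y\<rfloor> div d"
  have "d * q \<le> nat \<lfloor>y\<rfloor>" "nat \<lfloor>y\<rfloor> + 1 \<le> d * q + d"
    using mult_div_mod_eq[of d "nat \<lfloor>y\<rfloor>"] mod_less_divisor[OF assms(1), of "nat \<lfloor>y\<rfloor>"]
    unfolding q_def by linarith+
  then have "real d * real q \<le> real (nat \<lfloor>y\<rfloor>)" "real (nat \<lfloor>y\<rfloor>) + 1 \<le> real d * real q + real d"
    by (metis of_nat_le_iff of_nat_mult, metis of_nat_1 of_nat_add of_nat_le_iff of_nat_mult)
  moreover have "real (nat \<lfloor>y\<rfloor>) \<le> y" "y < real (nat \<lfloor>y\<rfloor>) + 1"
    using assms(2) by linarith+
  ultimately have "real d * real q \<le> y" "y < real d * real q + real d"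
    by linarith+
  then have "\<bar>real q / y - 1 / real d\<bar> = (y - real d * real q) / (real d * y)"
    using assms by (simp add: field_simps)
  also have "\<dots> \<le> real d / (real d * y)"
    using \<open>y < real d * real q + real d\<close> assms by (intro divide_right_mono) auto
  also have "\<dots> = 1 / y" using assms(1) by simp
  finally show ?thesis unfolding q_def .
qed

lemma norm_Mtilde_one_conv_minus_sum_le:
  fixes f :: "nat \<Rightarrow> complex"
  assumes "0 < y" and f_bounded: "\<forall>n\<ge>1. norm (f n) \<le> 1"
  shows "norm (Mtilde (one_conv f) y - (\<Sum>d\<in>{1..nat \<lfloor>y\<rfloor>}. f d / of_nat d)) \<le> 1"
proof -
  define N where "N = nat \<lfloor>y\<rfloor>"
  have "Mtilde (one_conv f) y - (\<Sum>d\<in>{1..N}. f d / of_nat d)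
      = (\<Sum>d\<in>{1..N}. f d * of_real (real (N div d) / y - 1 / real d))"
    unfolding Mtilde_def N_def sum_one_conv_eq sum_distrib_left sum_subtractf[symmetric]
    by (intro sum.cong refl) (simp add: field_simps)
  also have "norm \<dots> \<le> (\<Sum>d\<in>{1..N}. 1 / y)"
  proof (intro norm_sum[THEN order_trans] sum_mono)
    fix d assume "d \<in> {1..N}"
    then have "norm (f d) \<le> 1" "\<bar>real (N div d) / y - 1 / real d\<bar> \<le> 1 / y"
      using f_bounded abs_div_floor_div_minus_inverse_le[of d y] \<open>0 < y\<close>
      unfolding N_def by auto
    then show "norm (f d * of_real (real (N div d) / y - 1 / real d)) \<le> 1 / y"
      unfolding norm_mult norm_of_real using mult_mono[of _ 1 _ "1 / y"] by fastforce
  qed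
  also have "\<dots> \<le> 1" using \<open>0 < y\<close> by (simp add: N_def field_simps)
  finally show ?thesis unfolding N_def .
qed

lemma sum_inverse_floor_range_le_ln:
  fixes x w :: real
  assumes "1 \<le> x" "1 \<le> w"
  shows "(\<Sum>d\<in>{nat \<lfloor>x / w\<rfloor><..nat \<lfloor>x\<rfloor>}. 1 / real d) \<le> 1 + ln (2 * w)"
proof -
  define M N where "M = nat \<lfloor>x\<rfloor>" and "N = nat \<lfloor>x / w\<rfloor>"
  have M: "1 \<le> M" "real M \<le> x" and N: "real N \<le> x / w" "x / w < real N + 1"
    using assms unfolding M_def N_def by (auto simp: le_nat_iff)
  have "0 \<le> ln (2 * w)" using assms by simp
  show ?thesis
  proof (cases "N = 0")
    case True
    then have "real M \<le> 2 * w" using M N assms by (simp add: field_simps)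
    have "{N<..M} = insert 1 {1<..M}" using True M by auto
    then have "(\<Sum>d\<in>{N<..M}. 1 / real d) = 1 + (\<Sum>d\<in>{1<..M}. 1 / real d)" by simp
    also have "\<dots> \<le> 1 + ln M"
      using sum_inverse_greaterThanAtMost_le_ln[of 1 M] M by simp
    also have "\<dots> \<le> 1 + ln (2 * w)" using \<open>real M \<le> 2 * w\<close> M by simp
    finally show ?thesis unfolding M_def N_def .
  next
    case False
    have "x < w * real N + w" using N assms by (simp add: field_simps)
    also have "\<dots> \<le> 2 * w * real N" using False assms by simp
    finally have "x < 2 * w * real N" .
    then have "real M / real N \<le> 2 * w"
      using False M by (simp add: field_simps)
    have "N \<le> M" unfolding M_def N_def
      using assms by (intro nat_mono floor_mono) (simp add: field_simps)
    with False have "(\<Sum>d\<in>{N<..M}. 1 / real d) \<le> ln M - ln N"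
      by (intro sum_inverse_greaterThanAtMost_le_ln) auto
    also have "\<dots> = ln (real M / real N)" using False M by (simp add: ln_div)
    also have "\<dots> \<le> ln (2 * w)"
      using \<open>real M / real N \<le> 2 * w\<close> False M by (intro ln_mono) auto
    finally show ?thesis unfolding M_def N_def using \<open>0 \<le> ln (2 * w)\<close> by linarith
  qed
qed

lemma norm_Mtilde_one_conv_diff_le:
  fixes f :: "nat \<Rightarrow> complex" and x w :: real
  assumes f_bounded: "\<forall>n\<ge>1. norm (f n) \<le> 1" and x_ge_1: "1 \<le> x" and w_ge_1: "1 \<le> w"
  shows "norm (Mtilde (one_conv f) x - Mtilde (one_conv f) (x / w)) \<le> 3 + ln (2 * w)"
proof -
  define M N where "M = nat \<lfloor>x\<rfloor>" and "N = nat \<lfloor>x / w\<rfloor>"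
  define S where "S K = (\<Sum>d\<in>{1..K}. f d / of_nat d)" for K
  have "N \<le> M" unfolding M_def N_def
    using x_ge_1 w_ge_1 by (intro nat_mono floor_mono) (simp add: field_simps)
  then have "{1..M} = {1..N} \<union> {N<..M}" by auto
  then have "S M - S N = (\<Sum>d\<in>{N<..M}. f d / of_nat d)"
    unfolding S_def by (simp add: sum.union_disjoint ivl_disj_int)
  also have "norm \<dots> \<le> (\<Sum>d\<in>{N<..M}. 1 / real d)"
    using f_bounded by (intro norm_sum[THEN order_trans] sum_mono) (simp add: norm_divide divide_right_mono)
  also have "\<dots> \<le> 1 + ln (2 * w)"
    unfolding M_def N_def using x_ge_1 w_ge_1 by (rule sum_inverse_floor_range_le_ln)
  finally have "norm (S M - S N) \<le> 1 + ln (2 * w)" .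
  moreover have "norm (Mtilde (one_conv f) x - S M) \<le> 1"
    unfolding S_def M_def using x_ge_1 f_bounded by (intro norm_Mtilde_one_conv_minus_sum_le) auto
  moreover have "norm (Mtilde (one_conv f) (x / w) - S N) \<le> 1"
    unfolding S_def N_def using x_ge_1 w_ge_1 f_bounded
    by (intro norm_Mtilde_one_conv_minus_sum_le) auto
  ultimately show ?thesis
    using norm_triangle_ineq4[of "Mtilde (one_conv f) x - S M + (S M - S N)" "Mtilde (one_conv f) (x / w) - S N"]
      norm_triangle_ineq[of "Mtilde (one_conv f) x - S M" "S M - S N"]
    by (simp add: algebra_simps)
qed

lemma half_le_ln_two_mult:
  fixes w :: real
  assumes "1 \<le> w"
  shows "1 / 2 \<le> ln (2 * w)"
proof -
  have "ln (1 / 2 :: real) \<le> 1 / 2 - 1" by (rule ln_le_minus_one) simp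
  moreover have "ln 2 \<le> ln (2 * w)" using assms by simp
  ultimately show ?thesis by (simp add: ln_div)
qed

theorem lemma4p2:
  shows "\<exists>C::real. \<forall>(f::nat \<Rightarrow> complex) (x::real) (w::real).
           multiplicative f \<longrightarrow> (\<forall>n\<ge>1. norm (f n) \<le> 1) \<longrightarrow> x \<ge> 1 \<longrightarrow> w \<ge> 1 \<longrightarrow>
           norm (Mtilde (one_conv f) x - Mtilde (one_conv f) (x / w)) \<le> C * ln (2 * w)"
proof (intro exI[of _ 7] allI impI)
  fix f :: "nat \<Rightarrow> complex" and x w :: real
  assume "\<forall>n\<ge>1. norm (f n) \<le> 1" "1 \<le> x" "1 \<le> w"
  then have "norm (Mtilde (one_conv f) x - Mtilde (one_conv f) (x / w)) \<le> 3 + ln (2 * w)"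
    by (rule norm_Mtilde_one_conv_diff_le)
  moreover have "1 / 2 \<le> ln (2 * w)" using \<open>1 \<le> w\<close> by (rule half_le_ln_two_mult)
  ultimately show "norm (Mtilde (one_conv f) x - Mtilde (one_conv f) (x / w)) \<le> 7 * ln (2 * w)"
    by linarith
qed

end
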